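(* For every $f:\mathbb{Z}\to\mathbb{R}$ such that $\widetilde{M}f$ is not identically $+\infty$, $$\|(\widetilde{M}f)'\|_{\infty}\leq \frac{1}{2}\|f'\|_{\infty}.$$ Moreover, equality is attained when $f$ is a delta function (e.g. $f=\mathbf{1}_{\{0\}}$).
   Context: For $f:\mathbb{Z}\to\mathbb{R}$, the uncentered discrete Hardy–Littlewood maximal function is $\widetilde{M}f(n)=\sup_{r,s\in\mathbb{Z}_{\ge 0}}\frac{1}{r+s+1}\sum_{k=-s}^{r}|f(n+k)|$ (possibly $+\infty$). For $g:\mathbb{Z}\to\mathbb{R}$, $g'(n)=g(n+1)-g(n)$ and $\|g\|_\infty=\sup_{n\in\mathbb{Z}}|g(n)|$. *)

theory Defs
  imports "HOL-Analysis.Analysis"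
begin

text \<open>Uncentered discrete Hardy--Littlewood maximal function, valued in the extended reals
  (it may be +infinity). The pair (r,s) ranges over all pairs of nonnegative integers.\<close>
definition umax :: "(int \<Rightarrow> real) \<Rightarrow> int \<Rightarrow> ereal" where
  "umax f n = (SUP rs :: nat \<times> nat.
      ereal ((\<Sum>k = - int (snd rs) .. int (fst rs). \<bar>f (n + k)\<bar>) / real (fst rs + snd rs + 1)))"

definition dderiv :: "(int \<Rightarrow> real) \<Rightarrow> int \<Rightarrow> real" where
  "dderiv g n = g (n + 1) - g n"

definition supnorm :: "(int \<Rightarrow> real) \<Rightarrow> ereal" where
  "supnorm g = (SUP n. ereal \<bar>g n\<bar>)"

end

(* The maximal function is the supremum of the window averages avg |f| n r s of |f| over
   [n - s, n + r], and |f| has steps of size at most L = sup |f'|. Every window average at n is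
   matched up to L/2 by one at n + 1: a window reaching beyond n is also a window at n + 1, and a
   window [n - s, n] can be extended by the point n + 1, which costs at most L/2 because its
   average exceeds |f (n + 1)| by at most L (s + 2) / 2. Reflecting m to -m gives the same from
   n + 1 to n, so the maximal function moves by at most L/2 per step; in particular it is finite
   everywhere once it is finite somewhere. For f = c 1_{a} the maximal function is
   |c| / (|n - a| + 1), which drops by |c|/2 from a to a + 1, so the bound is attained. *)
theory Submission
  imports Defs
begin

definition avg :: "(int \<Rightarrow> real) \<Rightarrow> int \<Rightarrow> nat \<Rightarrow> nat \<Rightarrow> real" where
  "avg g n r s = (\<Sum>m = n - int s .. n + int r. g m) / real (r + s + 1)"

lemma umax_eq_SUP_avg: "umax f n = (SUP (r, s). ereal (avg (\<lambda>m. \<bar>f m\<bar>) n r s))"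
  unfolding umax_def avg_def
  by (intro SUP_cong refl arg_cong[where f = ereal])
     (auto simp: add.commute intro!: sum.reindex_bij_witness[of _ "\<lambda>m. m - n" "\<lambda>k. k + n"])

lemma avg_shift: "avg g (n + 1) r (Suc s) = avg g n (Suc r) s"
  unfolding avg_def by (simp add: algebra_simps)

lemma avg_reflect: "avg (\<lambda>m. g (- m)) (- n) s r = avg g n r s"
  unfolding avg_def
  by (auto simp: add.commute intro!: arg_cong2[where f = "(/)"]
        sum.reindex_bij_witness[of _ uminus uminus])

lemma abs_diff_le_by_dderiv:
  assumes "\<And>m. \<bar>dderiv g m\<bar> \<le> L"
  shows "\<bar>g (a + int d) - g a\<bar> \<le> real d * L"
proof (induction d)
  case (Suc d)
  have "\<bar>g (a + int d + 1) - g (a + int d)\<bar> \<le> L"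
    using assms[of "a + int d"] by (simp add: dderiv_def)
  with Suc show ?case by (simp add: algebra_simps)
qed simp

lemma sum_window_le_by_dderiv:
  assumes "\<And>m. \<bar>dderiv g m\<bar> \<le> L"
  shows "(\<Sum>m = n - int s .. n. g m)
           \<le> (real s + 1) * g (n + 1) + L * (real s + 1) * (real s + 2) / 2"
proof (induction s)
  case 0
  show ?case using assms[of n] by (simp add: dderiv_def)
next
  case (Suc s)
  have "{n - int (Suc s) .. n} = insert (n - int (Suc s)) {n - int s .. n}" by auto
  then have "(\<Sum>m = n - int (Suc s) .. n. g m) = g (n - int (Suc s)) + (\<Sum>m = n - int s .. n. g m)"
    by simp
  moreover have "g (n - int (Suc s)) \<le> g (n + 1) + real (s + 2) * L"
    using abs_diff_le_by_dderiv[OF assms, of "n - int (Suc s)" "s + 2"]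
    by (simp add: abs_le_iff algebra_simps)
  ultimately show ?case using Suc by (simp add: algebra_simps add_divide_distrib)
qed

lemma avg_step_right:
  assumes L: "\<And>m. \<bar>dderiv g m\<bar> \<le> L"
  shows "\<exists>r' s'. avg g n r s \<le> avg g (n + 1) r' s' + L / 2"
proof (cases r)
  case (Suc r')
  have "L \<ge> 0" using L by (meson abs_ge_zero order_trans)
  then have "avg g n r s \<le> avg g (n + 1) r' (Suc s) + L / 2"
    by (simp add: Suc avg_shift)
  then show ?thesis by blast
next
  case 0
  define S where "S = (\<Sum>m = n - int s .. n. g m)"
  have "{n + 1 - int (Suc s) .. n + 1} = insert (n + 1) {n - int s .. n}" by auto
  then have extended: "avg g (n + 1) 0 (Suc s) = (S + g (n + 1)) / (real s + 2)"
    by (simp add: avg_def S_def add.commute)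
  have window: "avg g n r s = S / (real s + 1)"
    by (simp add: avg_def S_def 0 add.commute)
  have "S \<le> (real s + 1) * g (n + 1) + L * (real s + 1) * (real s + 2) / 2"
    unfolding S_def by (rule sum_window_le_by_dderiv[OF L])
  then have "S / (real s + 1) \<le> (S + g (n + 1)) / (real s + 2) + L / 2"
    by (simp add: field_simps)
  then show ?thesis using window extended by metis
qed

lemma avg_step_left:
  assumes L: "\<And>m. \<bar>dderiv g m\<bar> \<le> L"
  shows "\<exists>r' s'. avg g (n + 1) r s \<le> avg g n r' s' + L / 2"
proof -
  have "\<bar>dderiv (\<lambda>m. g (- m)) m\<bar> \<le> L" for m
    using L[of "- m - 1"] by (simp add: dderiv_def)
  then obtain r' s' where
    "avg (\<lambda>m. g (- m)) (- (n + 1)) s r \<le> avg (\<lambda>m. g (- m)) (- (n + 1) + 1) r' s' + L / 2"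
    using avg_step_right by blast
  then have "avg g (n + 1) r s \<le> avg g n s' r' + L / 2"
    using avg_reflect[of g "n + 1"] avg_reflect[of g n] by simp
  then show ?thesis by blast
qed

lemma umax_le_if_avg_le:
  assumes "\<And>r s. \<exists>r' s'. avg (\<lambda>m. \<bar>f m\<bar>) n r s \<le> avg (\<lambda>m. \<bar>f m\<bar>) n' r' s' + c"
  shows "umax f n \<le> umax f n' + ereal c"
  unfolding umax_eq_SUP_avg
proof (rule SUP_least, clarify)
  fix r s
  obtain r' s' where "avg (\<lambda>m. \<bar>f m\<bar>) n r s \<le> avg (\<lambda>m. \<bar>f m\<bar>) n' r' s' + c"
    using assms by blast
  then have "ereal (avg (\<lambda>m. \<bar>f m\<bar>) n r s) \<le> ereal (avg (\<lambda>m. \<bar>f m\<bar>) n' r' s') + ereal c"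
    by simp
  also have "\<dots> \<le> (SUP (r, s). ereal (avg (\<lambda>m. \<bar>f m\<bar>) n' r s)) + ereal c"
    by (intro add_right_mono SUP_upper2[of "(r', s')"]) auto
  finally show "ereal (avg (\<lambda>m. \<bar>f m\<bar>) n r s) \<le> \<dots>" .
qed

lemma abs_dderiv_abs_le: "\<bar>dderiv (\<lambda>m. \<bar>f m\<bar>) n\<bar> \<le> \<bar>dderiv f n\<bar>"
  unfolding dderiv_def by (rule abs_triangle_ineq3)

lemma umax_step:
  assumes "\<And>m. \<bar>dderiv f m\<bar> \<le> L"
  shows "umax f n \<le> umax f (n + 1) + ereal (L / 2)"
    and "umax f (n + 1) \<le> umax f n + ereal (L / 2)"
proof -
  have L: "\<bar>dderiv (\<lambda>m. \<bar>f m\<bar>) m\<bar> \<le> L" for m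
    using abs_dderiv_abs_le assms order_trans by blast
  show "umax f n \<le> umax f (n + 1) + ereal (L / 2)"
    by (rule umax_le_if_avg_le) (rule avg_step_right[OF L])
  show "umax f (n + 1) \<le> umax f n + ereal (L / 2)"
    by (rule umax_le_if_avg_le) (rule avg_step_left[OF L])
qed

lemma umax_nonneg: "umax f n \<ge> 0"
  unfolding umax_eq_SUP_avg by (rule SUP_upper2[of "(0, 0)"]) (auto simp: avg_def)

lemma umax_finite:
  assumes L: "\<And>m. \<bar>dderiv f m\<bar> \<le> L" and finite_at: "umax f n\<^sub>0 \<noteq> \<infinity>"
  shows "umax f n = ereal (real_of_ereal (umax f n))"
proof -
  have "umax f n \<noteq> \<infinity>"
  proof (induction n rule: int_induct[where k = n\<^sub>0])
    case (step1 i)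
    then show ?case using umax_step(2)[OF L, of i] by auto
  next
    case (step2 i)
    then show ?case using umax_step(1)[OF L, of "i - 1"] by auto
  qed (fact finite_at)
  then show ?thesis using umax_nonneg[of f n] by (cases "umax f n") auto
qed

lemma abs_dderiv_umax_le:
  assumes "\<And>m. \<bar>dderiv f m\<bar> \<le> L" and "umax f n\<^sub>0 \<noteq> \<infinity>"
  shows "\<bar>dderiv (\<lambda>n. real_of_ereal (umax f n)) n\<bar> \<le> L / 2"
proof -
  define M where "M k = real_of_ereal (umax f k)" for k
  have "umax f k = ereal (M k)" for k
    unfolding M_def by (rule umax_finite[OF assms])
  then have "M n \<le> M (n + 1) + L / 2" "M (n + 1) \<le> M n + L / 2"
    using umax_step[OF assms(1), of n] by simp_all
  then show ?thesis
    unfolding dderiv_def M_def[symmetric] by linarith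
qed

lemma abs_le_supnorm: "ereal \<bar>g n\<bar> \<le> supnorm g"
  unfolding supnorm_def by (rule SUP_upper) simp

lemma supnorm_le_iff: "supnorm g \<le> ereal B \<longleftrightarrow> (\<forall>n. \<bar>g n\<bar> \<le> B)"
  unfolding supnorm_def by (simp add: SUP_le_iff)

lemma supnorm_dderiv_umax_le:
  assumes "umax f n\<^sub>0 \<noteq> \<infinity>"
  shows "supnorm (dderiv (\<lambda>n. real_of_ereal (umax f n))) \<le> ereal (1/2) * supnorm (dderiv f)"
proof (cases "supnorm (dderiv f)")
  case (real L)
  then have "\<bar>dderiv f m\<bar> \<le> L" for m
    using abs_le_supnorm[of "dderiv f" m] by simp
  then have "supnorm (dderiv (\<lambda>n. real_of_ereal (umax f n))) \<le> ereal (L / 2)"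
    unfolding supnorm_le_iff using abs_dderiv_umax_le assms by blast
  then show ?thesis using real by simp
next
  case MInf
  then show ?thesis using abs_le_supnorm[of "dderiv f" 0] by simp
qed simp

lemma umax_delta: "umax (\<lambda>m. c * indicator {a} m) n = ereal (\<bar>c\<bar> / (real_of_int \<bar>n - a\<bar> + 1))"
proof -
  have avg_delta: "avg (\<lambda>m. \<bar>c * indicator {a} m\<bar>) n r s =
      (if n - int s \<le> a \<and> a \<le> n + int r then \<bar>c\<bar> else 0) / real (r + s + 1)" for r s
  proof -
    have delta: "(\<lambda>m. \<bar>c * indicator {a} m\<bar>) = (\<lambda>m. if m = a then \<bar>c\<bar> else 0)"
      by (auto simp: indicator_def)
    show ?thesis unfolding avg_def delta by (simp add: sum.delta')
  qed
  show ?thesis unfolding umax_eq_SUP_avg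
  proof (rule antisym)
    show "(SUP (r, s). ereal (avg (\<lambda>m. \<bar>c * indicator {a} m\<bar>) n r s))
        \<le> ereal (\<bar>c\<bar> / (real_of_int \<bar>n - a\<bar> + 1))"
    proof (rule SUP_least, clarify)
      fix r s
      have "(if n - int s \<le> a \<and> a \<le> n + int r then \<bar>c\<bar> else 0) / real (r + s + 1)
              \<le> \<bar>c\<bar> / (real_of_int \<bar>n - a\<bar> + 1)"
      proof (cases "n - int s \<le> a \<and> a \<le> n + int r")
        case True
        then have "real_of_int \<bar>n - a\<bar> + 1 \<le> real (r + s + 1)" by linarith
        then show ?thesis using True by (simp add: frac_le)
      qed auto
      then show "ereal (avg (\<lambda>m. \<bar>c * indicator {a} m\<bar>) n r s)
          \<le> ereal (\<bar>c\<bar> / (real_of_int \<bar>n - a\<bar> + 1))" by (simp add: avg_delta)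
    qed
    have "n - int (nat (n - a)) \<le> a \<and> a \<le> n + int (nat (a - n))" by linarith
    moreover have "real (nat (a - n) + nat (n - a) + 1) = real_of_int \<bar>n - a\<bar> + 1" by linarith
    ultimately have "avg (\<lambda>m. \<bar>c * indicator {a} m\<bar>) n (nat (a - n)) (nat (n - a))
        = \<bar>c\<bar> / (real_of_int \<bar>n - a\<bar> + 1)"
      unfolding avg_delta by simp
    then show "ereal (\<bar>c\<bar> / (real_of_int \<bar>n - a\<bar> + 1))
        \<le> (SUP (r, s). ereal (avg (\<lambda>m. \<bar>c * indicator {a} m\<bar>) n r s))"
      by (intro SUP_upper2[of "(nat (a - n), nat (n - a))"]) auto
  qed
qed

lemma supnorm_dderiv_delta: "supnorm (dderiv (\<lambda>m. c * indicator {a} m)) = ereal \<bar>c\<bar>"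
proof (rule antisym)
  show "supnorm (dderiv (\<lambda>m. c * indicator {a} m)) \<le> ereal \<bar>c\<bar>"
    unfolding supnorm_le_iff by (simp add: dderiv_def indicator_def)
  show "ereal \<bar>c\<bar> \<le> supnorm (dderiv (\<lambda>m. c * indicator {a} m))"
    using abs_le_supnorm[of "dderiv (\<lambda>m. c * indicator {a} m)" a] by (simp add: dderiv_def)
qed

lemma supnorm_dderiv_umax_delta:
  "supnorm (dderiv (\<lambda>n. real_of_ereal (umax (\<lambda>m. c * indicator {a} m) n)))
     = ereal (1/2) * supnorm (dderiv (\<lambda>m. c * indicator {a} m))"
    (is "supnorm (dderiv ?M) = _")
proof (rule antisym)
  show "supnorm (dderiv ?M) \<le> ereal (1/2) * supnorm (dderiv (\<lambda>m. c * indicator {a} m))"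
    by (rule supnorm_dderiv_umax_le[of _ a]) (simp add: umax_delta)
  have "\<bar>dderiv ?M a\<bar> = \<bar>c\<bar> / 2"
    by (simp add: dderiv_def umax_delta)
  then have "ereal (\<bar>c\<bar> / 2) \<le> supnorm (dderiv ?M)"
    using abs_le_supnorm[of "dderiv ?M" a] by metis
  then show "ereal (1/2) * supnorm (dderiv (\<lambda>m. c * indicator {a} m)) \<le> supnorm (dderiv ?M)"
    by (simp add: supnorm_dderiv_delta)
qed

theorem theorem5p4:
  shows "(\<forall>f :: int \<Rightarrow> real. (\<exists>n. umax f n \<noteq> \<infinity>) \<longrightarrow>
            supnorm (dderiv (\<lambda>n. real_of_ereal (umax f n))) \<le> ereal (1/2) * supnorm (dderiv f))
       \<and> (\<forall>(a :: int) (c :: real).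
            supnorm (dderiv (\<lambda>n. real_of_ereal (umax (\<lambda>m. c * indicator {a} m) n)))
              = ereal (1/2) * supnorm (dderiv (\<lambda>m. c * indicator {a} m)))"
  using supnorm_dderiv_umax_le supnorm_dderiv_umax_delta by blast

end
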